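(* Let $\varphi:\mathbb{M}(n)\to\mathbb{C}$ be a positive unital linear functional, let $M>0$, and let $A\in\mathbb{M}(n)$ be Hermitian with $0\le A\le MI$. Then $$0\le\det\begin{pmatrix}\varphi(A)&\varphi(A^2)\\ \varphi(A^2)&\varphi(A^3)\end{pmatrix}\le\frac{M^4}{27}.$$
   Context: $\mathbb{M}(n)$ is the algebra of $n\times n$ complex matrices. A linear functional $\varphi$ on $\mathbb{M}(n)$ is positive if $\varphi(A)\ge0$ whenever $A$ is positive semidefinite, and unital if $\varphi(I)=1$. The order $0\le A\le MI$ is the Loewner order ($A$ and $MI-A$ positive semidefinite). *)

theory Defs
  imports "HOL-Analysis.Analysis" "HOL-Library.Complex_Order"
begin

text \<open>n x n complex matrices are modelled as complex^'n^'n ('n a finite index type).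
  Complex numbers carry the partial order of HOL-Library.Complex_Order:
  z \<le> w iff Re z \<le> Re w and Im z = Im w.\<close>

definition cmat_adjoint :: "complex^'n^'n \<Rightarrow> complex^'n^'n" where
  "cmat_adjoint A = (\<chi> i j. cnj (A $ j $ i))"

definition cmat_hermitian :: "complex^'n^'n \<Rightarrow> bool" where
  "cmat_hermitian A \<longleftrightarrow> cmat_adjoint A = A"

definition cmat_psd :: "complex^'n^'n \<Rightarrow> bool" where
  "cmat_psd A \<longleftrightarrow> cmat_hermitian A \<and>
     (\<forall>x :: complex^'n. 0 \<le> (\<Sum>i\<in>UNIV. cnj (x $ i) * (A *v x) $ i))"

definition cmat_scale :: "complex \<Rightarrow> complex^'n^'n \<Rightarrow> complex^'n^'n" where
  "cmat_scale c A = (\<chi> i j. c * A $ i $ j)"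

definition complex_linear_functional :: "(complex^'n^'n \<Rightarrow> complex) \<Rightarrow> bool" where
  "complex_linear_functional \<phi> \<longleftrightarrow>
     (\<forall>A B. \<phi> (A + B) = \<phi> A + \<phi> B) \<and> (\<forall>c A. \<phi> (cmat_scale c A) = c * \<phi> A)"

definition positive_functional :: "(complex^'n^'n \<Rightarrow> complex) \<Rightarrow> bool" where
  "positive_functional \<phi> \<longleftrightarrow> (\<forall>A. cmat_psd A \<longrightarrow> 0 \<le> \<phi> A)"

definition unital_functional :: "(complex^'n^'n \<Rightarrow> complex) \<Rightarrow> bool" where
  "unital_functional \<phi> \<longleftrightarrow> \<phi> (mat 1) = 1"

end

theory Submission
  imports Defs
begin

(* For real t the matrix A - tI is Hermitian, so the congruences (A - tI) A (A - tI) and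
   (A - tI) (MI - A) (A - tI) are positive semidefinite.  Applying phi and writing a, b, c for
   phi(A), phi(A^2), phi(A^3) gives two real quadratics in t that are nonnegative everywhere,
     a t^2 - 2 b t + c   and   (M - a) t^2 - 2 (M a - b) t + (M b - c).
   Their discriminant conditions b^2 <= a c and (M a - b)^2 <= (M - a) (M b - c) carry the whole
   argument: the first is the lower bound, and the second together with AM-GM gives
   a c - b^2 <= M a^2 (M - a) / 4 <= M^4 / 27. *)

lemma matrix_diff_ldistrib:
  fixes A :: "'a::ring_1^'n^'m" and B C :: "'a^'p^'n"
  shows "A ** (B - C) = A ** B - A ** C"
  by (simp add: vec_eq_iff matrix_matrix_mult_def right_diff_distrib sum_subtractf)

lemma matrix_diff_rdistrib:
  fixes A B :: "'a::ring_1^'n^'m" and C :: "'a^'p^'n"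
  shows "(A - B) ** C = A ** C - B ** C"
  by (simp add: vec_eq_iff matrix_matrix_mult_def left_diff_distrib sum_subtractf)

lemma mat_of_real_eq_scaleR: "mat (of_real t :: 'a::real_algebra_1) = t *\<^sub>R mat 1"
  by (simp add: vec_eq_iff mat_def of_real_def)

lemma cmat_scale_of_real: "cmat_scale (complex_of_real t) A = t *\<^sub>R A"
  by (simp add: vec_eq_iff cmat_scale_def of_real_def)

lemma cmat_adjoint_mult: "cmat_adjoint (A ** B) = cmat_adjoint B ** cmat_adjoint A"
  by (simp add: vec_eq_iff matrix_matrix_mult_def cmat_adjoint_def mult.commute)

lemma cmat_hermitian_mat_of_real: "cmat_hermitian (mat (complex_of_real t))"
  by (simp add: cmat_hermitian_def vec_eq_iff cmat_adjoint_def mat_def)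

lemma cmat_hermitian_diff:
  "cmat_hermitian A \<Longrightarrow> cmat_hermitian B \<Longrightarrow> cmat_hermitian (A - B)"
  by (simp add: cmat_hermitian_def vec_eq_iff cmat_adjoint_def)

lemma cmat_hermitian_inner_swap:
  assumes "cmat_hermitian B"
  shows "(\<Sum>i\<in>UNIV. cnj (x $ i) * (B *v y) $ i) = (\<Sum>j\<in>UNIV. cnj ((B *v x) $ j) * y $ j)"
proof -
  have entry: "cnj (B $ j $ i) = B $ i $ j" for i j
    using arg_cong[OF assms[unfolded cmat_hermitian_def], of "\<lambda>X. X $ i $ j"]
    by (simp add: cmat_adjoint_def)
  have "(\<Sum>i\<in>UNIV. cnj (x $ i) * (B *v y) $ i)
      = (\<Sum>i\<in>UNIV. \<Sum>j\<in>UNIV. cnj (x $ i) * B $ i $ j * y $ j)"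
    by (simp add: matrix_vector_mult_def sum_distrib_left mult.assoc)
  also have "\<dots> = (\<Sum>j\<in>UNIV. \<Sum>i\<in>UNIV. cnj (x $ i) * B $ i $ j * y $ j)"
    by (rule sum.swap)
  also have "\<dots> = (\<Sum>j\<in>UNIV. cnj ((B *v x) $ j) * y $ j)"
  proof (rule sum.cong[OF refl])
    fix j
    have "cnj ((B *v x) $ j) = (\<Sum>i\<in>UNIV. cnj (x $ i) * B $ i $ j)"
      by (simp add: matrix_vector_mult_def entry mult.commute)
    then show "(\<Sum>i\<in>UNIV. cnj (x $ i) * B $ i $ j * y $ j) = cnj ((B *v x) $ j) * y $ j"
      by (simp add: sum_distrib_right)
  qed
  finally show ?thesis .
qed

lemma cmat_psd_mat_1: "cmat_psd (mat 1)"
proof -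
  have "0 \<le> cnj z * z" for z :: complex
    using complex_norm_square[of z] by (simp add: mult.commute less_eq_complex_def)
  moreover have "cmat_hermitian (mat 1)"
    using cmat_hermitian_mat_of_real[of 1] by simp
  ultimately show ?thesis
    by (simp add: cmat_psd_def sum_nonneg)
qed

lemma cmat_psd_congruence:
  fixes B P :: "complex^'n^'n"
  assumes "cmat_psd P" and "cmat_hermitian B"
  shows "cmat_psd (B ** P ** B)"
  unfolding cmat_psd_def
proof
  show "cmat_hermitian (B ** P ** B)"
    using assms by (simp add: cmat_psd_def cmat_hermitian_def cmat_adjoint_mult matrix_mul_assoc)
  show "\<forall>x. 0 \<le> (\<Sum>i\<in>UNIV. cnj (x $ i) * ((B ** P ** B) *v x) $ i)"
  proof
    fix x :: "complex^'n"
    have "(B ** P ** B) *v x = B *v (P *v (B *v x))"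
      by (simp add: matrix_vector_mul_assoc matrix_mul_assoc)
    then show "0 \<le> (\<Sum>i\<in>UNIV. cnj (x $ i) * ((B ** P ** B) *v x) $ i)"
      using assms cmat_hermitian_inner_swap[OF assms(2), of x "P *v (B *v x)"]
      by (simp add: cmat_psd_def)
  qed
qed

lemma complex_linear_functional_add:
  assumes "complex_linear_functional \<phi>"
  shows "\<phi> (A + B) = \<phi> A + \<phi> B"
  using assms by (simp add: complex_linear_functional_def)

lemma complex_linear_functional_diff:
  assumes "complex_linear_functional \<phi>"
  shows "\<phi> (A - B) = \<phi> A - \<phi> B"
  using assms[unfolded complex_linear_functional_def, THEN conjunct1, rule_format, of "A - B" B]
  by simp

lemma complex_linear_functional_scaleR:
  assumes "complex_linear_functional \<phi>"
  shows "\<phi> (t *\<^sub>R A) = complex_of_real t * \<phi> A"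
  using assms by (simp add: complex_linear_functional_def flip: cmat_scale_of_real)

lemma linear_unital_functional_mat_of_real:
  assumes "complex_linear_functional \<phi>" and "unital_functional \<phi>"
  shows "\<phi> (mat (complex_of_real t)) = complex_of_real t"
  using assms by (simp add: mat_of_real_eq_scaleR complex_linear_functional_scaleR unital_functional_def)

lemma linear_unital_functional_complement_moments:
  fixes A :: "complex^'n^'n" and M :: real
  assumes "complex_linear_functional \<phi>" and "unital_functional \<phi>"
  defines "C \<equiv> mat (complex_of_real M) - A"
  shows "\<phi> C = complex_of_real M - \<phi> A"
    and "\<phi> (A ** C) = complex_of_real M * \<phi> A - \<phi> (A ** A)"
    and "\<phi> (C ** A) = complex_of_real M * \<phi> A - \<phi> (A ** A)"
    and "\<phi> (A ** C ** A) = complex_of_real M * \<phi> (A ** A) - \<phi> (A ** A ** A)"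
proof -
  have "A ** C = M *\<^sub>R A - A ** A" and "C ** A = M *\<^sub>R A - A ** A"
    and "A ** C ** A = M *\<^sub>R (A ** A) - A ** A ** A"
    unfolding C_def
    by (simp_all add: mat_of_real_eq_scaleR matrix_diff_ldistrib matrix_diff_rdistrib
        matrix_scalar_ac flip: scalar_matrix_assoc)
  then show "\<phi> C = complex_of_real M - \<phi> A"
    and "\<phi> (A ** C) = complex_of_real M * \<phi> A - \<phi> (A ** A)"
    and "\<phi> (C ** A) = complex_of_real M * \<phi> A - \<phi> (A ** A)"
    and "\<phi> (A ** C ** A) = complex_of_real M * \<phi> (A ** A) - \<phi> (A ** A ** A)"
    using assms unfolding C_def
    by (simp_all add: complex_linear_functional_diff complex_linear_functional_scaleR
        linear_unital_functional_mat_of_real)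
qed

lemma positive_functional_psd_real:
  assumes "positive_functional \<phi>" and "cmat_psd P"
  shows "\<phi> P = complex_of_real (Re (\<phi> P))"
  using assms by (auto simp: positive_functional_def less_eq_complex_def complex_eq_iff)

lemma complex_linear_functional_shifted_congruence:
  assumes "complex_linear_functional \<phi>"
  shows "\<phi> ((A - mat (complex_of_real t)) ** P ** (A - mat (complex_of_real t)))
    = \<phi> (A ** P ** A) - complex_of_real t * (\<phi> (A ** P) + \<phi> (P ** A)) + complex_of_real t ^ 2 * \<phi> P"
proof -
  have expand: "(A - mat (complex_of_real t)) ** P ** (A - mat (complex_of_real t))
      = A ** P ** A - t *\<^sub>R (A ** P) - (t *\<^sub>R (P ** A) - (t * t) *\<^sub>R P)"
    by (simp add: mat_of_real_eq_scaleR matrix_diff_ldistrib matrix_diff_rdistrib matrix_scalar_ac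
        scaleR_right_diff_distrib flip: scalar_matrix_assoc)
  show ?thesis
    unfolding expand using assms
    by (simp add: complex_linear_functional_add complex_linear_functional_diff
        complex_linear_functional_scaleR power2_eq_square algebra_simps)
qed

lemma positive_functional_shifted_congruence_nonneg:
  assumes "complex_linear_functional \<phi>" and "positive_functional \<phi>"
    and "cmat_hermitian A" and "cmat_psd P"
  shows "0 \<le> \<phi> (A ** P ** A) - complex_of_real t * (\<phi> (A ** P) + \<phi> (P ** A))
    + complex_of_real t ^ 2 * \<phi> P"
proof -
  have "cmat_psd ((A - mat (complex_of_real t)) ** P ** (A - mat (complex_of_real t)))"
    by (intro cmat_psd_congruence cmat_hermitian_diff cmat_hermitian_mat_of_real assms(3,4))
  with assms(2) have "0 \<le> \<phi> ((A - mat (complex_of_real t)) ** P ** (A - mat (complex_of_real t)))"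
    unfolding positive_functional_def by blast
  then show ?thesis
    unfolding complex_linear_functional_shifted_congruence[OF assms(1)] .
qed

lemma nonneg_quadratic_discriminant:
  fixes p q r :: real
  assumes nonneg: "\<And>t. 0 \<le> p*t^2 - 2*q*t + r"
  shows "0 \<le> p" and "0 \<le> r" and "q^2 \<le> p*r"
proof -
  show "0 \<le> p"
  proof (rule ccontr)
    assume "\<not> 0 \<le> p"
    define t where "t = sqrt ((\<bar>r\<bar> + 1) / (-p))"
    have "t^2 = (\<bar>r\<bar> + 1) / (-p)"
      using \<open>\<not> 0 \<le> p\<close> unfolding t_def by (simp add: divide_nonneg_neg)
    then have "p*t^2 = -(\<bar>r\<bar> + 1)"
      using \<open>\<not> 0 \<le> p\<close> by (simp add: field_simps)
    moreover have "0 \<le> (p*t^2 - 2*q*t + r) + (p*(-t)^2 - 2*q*(-t) + r)"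
      using nonneg[of t] nonneg[of "-t"] by linarith
    ultimately show False by simp
  qed
  show "0 \<le> r"
    using nonneg[of 0] by simp
  show "q^2 \<le> p*r"
  proof (cases "p = 0")
    case True
    have "0 \<le> r - 2*q*((r + 1)/(2*q))" if "q \<noteq> 0"
      using nonneg[of "(r + 1)/(2*q)"] True by simp
    then have "q = 0" by (cases "q = 0") simp_all
    with True show ?thesis by simp
  next
    case False
    with \<open>0 \<le> p\<close> have "p > 0" by simp
    have "0 \<le> p*(q/p)^2 - 2*q*(q/p) + r" by (rule nonneg)
    also have "\<dots> = (p*r - q^2)/p"
      using \<open>p > 0\<close> by (simp add: field_simps power2_eq_square)
    finally show ?thesis using \<open>p > 0\<close> by (simp add: zero_le_divide_iff)
  qed
qed

lemma sq_mult_diff_le: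
  fixes a M :: real
  assumes "0 \<le> a" "0 \<le> M"
  shows "a^2 * (M - a) \<le> 4 * M^3 / 27"
proof -
  have "0 \<le> (2*M - 3*a)^2 * (M + 3*a)" using assms by simp
  then show ?thesis by (simp add: algebra_simps power2_eq_square power3_eq_cube)
qed

lemma moment_det_le:
  fixes a b c M :: real
  assumes "0 \<le> a" "a \<le> M" "c \<le> M*b" and disc: "(M*a - b)^2 \<le> (M - a)*(M*b - c)"
  shows "a*c - b^2 \<le> M^4/27"
proof -
  have "a*c - b^2 \<le> M * (a^2 * (M - a)) / 4"
  proof (cases "a = M")
    case True
    with disc have "b = M*M" by simp
    with True \<open>c \<le> M*b\<close> \<open>0 \<le> a\<close> have "a*c \<le> b^2"
      by (simp add: power2_eq_square mult_left_mono mult.assoc)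
    with True show ?thesis by simp
  next
    case False
    with \<open>a \<le> M\<close> have "M - a > 0" by simp
    have "a*(M*a - b)^2 \<le> a*((M - a)*(M*b - c))"
      using disc \<open>0 \<le> a\<close> by (rule mult_left_mono)
    then have "(a*c - b^2)*(M - a) \<le> M*((M*a - b)*(b - a^2))"
      by (simp add: algebra_simps power2_eq_square)
    also have "(M*a - b)*(b - a^2) \<le> (a*(M - a))^2/4"
      using zero_le_power2[of "(M*a - b) - (b - a^2)"] by (simp add: algebra_simps power2_eq_square)
    then have "M*((M*a - b)*(b - a^2)) \<le> M*((a*(M - a))^2/4)"
      using assms by (intro mult_left_mono) auto
    finally have "(a*c - b^2)*(M - a) \<le> (M * (a^2 * (M - a)) / 4)*(M - a)"
      by (simp add: power2_eq_square algebra_simps)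
    with \<open>M - a > 0\<close> show ?thesis by simp
  qed
  also have "\<dots> \<le> M * (4 * M^3 / 27) / 4"
    using assms sq_mult_diff_le[of a M] by (intro divide_right_mono mult_left_mono) auto
  finally show ?thesis by (simp add: power_numeral_reduce)
qed

theorem theorem3p2:
  fixes \<phi> :: "complex^'n^'n \<Rightarrow> complex" and A :: "complex^'n^'n" and M :: real
  assumes "complex_linear_functional \<phi>" and "positive_functional \<phi>" and "unital_functional \<phi>"
    and "M > 0"
    and "cmat_hermitian A" and "cmat_psd A" and "cmat_psd (mat (complex_of_real M) - A)"
  shows "0 \<le> det (vector [vector [\<phi> A, \<phi> (A ** A)],
                          vector [\<phi> (A ** A), \<phi> (A ** A ** A)]] :: complex^2^2)
    \<and> det (vector [vector [\<phi> A, \<phi> (A ** A)],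
                   vector [\<phi> (A ** A), \<phi> (A ** A ** A)]] :: complex^2^2)
        \<le> complex_of_real (M ^ 4 / 27)"
proof -
  note lin = assms(1) and pos = assms(2)
  define a b c where "a = Re (\<phi> A)" and "b = Re (\<phi> (A ** A))" and "c = Re (\<phi> (A ** A ** A))"
  have "cmat_psd (A ** A)"
    using cmat_psd_congruence[OF cmat_psd_mat_1 assms(5)] by simp
  then have moments: "\<phi> A = of_real a" "\<phi> (A ** A) = of_real b" "\<phi> (A ** A ** A) = of_real c"
    unfolding a_def b_def c_def
    using positive_functional_psd_real[OF pos] cmat_psd_congruence[OF assms(6,5)] assms(6)
    by blast+
  have "0 \<le> a*t^2 - 2*b*t + c" for t
    using positive_functional_shifted_congruence_nonneg[OF lin pos assms(5,6), of t]
    by (simp add: moments less_eq_complex_def power2_eq_square algebra_simps)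
  note quad1 = nonneg_quadratic_discriminant[OF this]
  have "0 \<le> (M - a)*t^2 - 2*(M*a - b)*t + (M*b - c)" for t
    using positive_functional_shifted_congruence_nonneg[OF lin pos assms(5,7), of t]
    by (simp add: linear_unital_functional_complement_moments[OF lin assms(3)] moments
        less_eq_complex_def power2_eq_square algebra_simps)
  note quad2 = nonneg_quadratic_discriminant[OF this]
  have "det (vector [vector [\<phi> A, \<phi> (A ** A)], vector [\<phi> (A ** A), \<phi> (A ** A ** A)]]
      :: complex^2^2) = of_real (a*c - b^2)"
    by (simp add: det_2 vector_1 vector_2 moments power2_eq_square)
  moreover have "a*c - b^2 \<le> M^4/27"
    using moment_det_le quad1 quad2 by simp
  ultimately show ?thesis
    using quad1(3) by (simp add: less_eq_complex_def)
qed

end
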